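(* Let $R$ be a unital associative ring and $$A=\begin{pmatrix}1&1&1\\1&a&b\\1&c&d\end{pmatrix}\in M_3(R).$$ Then all $1\times1$ and $2\times2$ submatrices of $A$ are invertible if and only if the elements $a,b,c,d,a-1,b-1,c-1,d-1,d-c,d-b,c-a,b-a$ and $db^{-1}-ca^{-1}$ are invertible in $R$. Furthermore, if all $1\times1$ and $2\times2$ submatrices of $A$ are invertible, then $$A\text{ is invertible}\iff (d-c)^{-1}(c-1)-(b-a)^{-1}(a-1)\in R^*,$$ $$J_2(A)\text{ is invertible}\iff (c-1)(d-c)^{-1}d-(a-1)(b-a)^{-1}b\in R^*.$$ In particular, $A\in\widehat{\cal S}$ if and only if the $15$ elements $a,b,c,d,a-1,b-1,c-1,d-1,d-c,d-b,c-a,b-a,db^{-1}-ca^{-1}$, $(d-c)^{-1}(c-1)-(b-a)^{-1}(a-1)$ and $(c-1)(d-c)^{-1}d-(a-1)(b-a)^{-1}b$ are invertible in $R$.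
   Context: $R^*$ denotes the units of $R$. For $M\in M_3(R)$ with all entries in $R^*$, $J_2(M)$ is the matrix with $(j,k)$-entry $(M_{kj})^{-1}$. ${\cal S}=\{M\in M_3(R):$ all square submatrices of $M$ are invertible and $J_2(M)$ is invertible$\}$, $\widehat M_3(R)$ is the set of $3\times3$ matrices whose first row and column consist of $1$'s, and $\widehat{\cal S}={\cal S}\cap\widehat M_3(R)$. *)

theory Defs
  imports Main
begin

definition is_unit :: "'a::ring_1 \<Rightarrow> bool" where
  "is_unit x \<longleftrightarrow> (\<exists>y. x * y = 1 \<and> y * x = 1)"

definition uinv :: "'a::ring_1 \<Rightarrow> 'a" where
  "uinv x = (SOME y. x * y = 1 \<and> y * x = 1)"

text \<open>Square matrices of size n over R, represented as functions on indices {0..<n}.\<close>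
type_synonym 'a mat = "nat \<Rightarrow> nat \<Rightarrow> 'a"

definition mat_mul :: "nat \<Rightarrow> 'a::ring_1 mat \<Rightarrow> 'a mat \<Rightarrow> 'a mat" where
  "mat_mul n A B = (\<lambda>i j. \<Sum>k<n. A i k * B k j)"

definition mat_invertible :: "nat \<Rightarrow> 'a::ring_1 mat \<Rightarrow> bool" where
  "mat_invertible n A \<longleftrightarrow> (\<exists>B. (\<forall>i<n. \<forall>j<n. mat_mul n A B i j = (if i = j then 1 else 0))
                                 \<and> (\<forall>i<n. \<forall>j<n. mat_mul n B A i j = (if i = j then 1 else 0)))"

definition all_sub_inv :: "'a::ring_1 mat \<Rightarrow> nat \<Rightarrow> bool" where
  "all_sub_inv M k \<longleftrightarrow> (\<forall>rs cs. length rs = k \<and> length cs = k \<and>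
      sorted_wrt (<) rs \<and> sorted_wrt (<) cs \<and> set rs \<subseteq> {..<3} \<and> set cs \<subseteq> {..<3}
      \<longrightarrow> mat_invertible k (\<lambda>i j. M (rs ! i) (cs ! j)))"

definition J2 :: "'a::ring_1 mat \<Rightarrow> 'a mat" where
  "J2 M = (\<lambda>j k. uinv (M k j))"

definition S_set :: "'a::ring_1 mat set" where
  "S_set = {M. (\<forall>k\<in>{1,2,3}. all_sub_inv M k) \<and> mat_invertible 3 (J2 M)}"

definition hat_M3 :: "'a::ring_1 mat set" where
  "hat_M3 = {M. \<forall>i<3. M 0 i = 1 \<and> M i 0 = 1}"

definition hat_S :: "'a::ring_1 mat set" where
  "hat_S = S_set \<inter> hat_M3"

definition matA :: "'a::ring_1 \<Rightarrow> 'a \<Rightarrow> 'a \<Rightarrow> 'a \<Rightarrow> 'a mat" where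
  "matA a b c d = (\<lambda>i j. [[1,1,1],[1,a,b],[1,c,d]] ! i ! j)"

end

theory Submission
  imports Defs
begin

text \<open>A 2x2 matrix [[p, q], [r, s]] with p a unit is invertible exactly when its Schur complement
s - r p^-1 q is a unit; this turns each 1x1 and 2x2 minor of A into one of the listed elements.
A 3x3 matrix whose first row and column consist of ones, such as A and J_2(A), is invertible iff the
2x2 matrix of its remaining entries minus 1 is, since subtracting the first row and column is an
invertible operation. The Schur complement of that 2x2 matrix is then a unit multiple of the
stated element: for A because (a - 1)^-1 (b - a) and d - c are units, for J_2(A) because the
inverse of b^-1 - a^-1 is -a (b - a)^-1 b.\<close>

lemma right_uinv: "is_unit x \<Longrightarrow> x * uinv x = 1"
  and left_uinv: "is_unit x \<Longrightarrow> uinv x * x = 1"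
  unfolding is_unit_def uinv_def by (metis (mono_tags, lifting) someI_ex)+

lemma uinv_unique:
  assumes "x * y = 1" and "y * x = 1"
  shows "uinv x = y"
proof -
  have "is_unit x" using assms by (auto simp: is_unit_def)
  have "uinv x = uinv x * (x * y)" using assms by simp
  also have "\<dots> = y" using left_uinv[OF \<open>is_unit x\<close>] by (simp add: mult.assoc[symmetric])
  finally show ?thesis .
qed

lemma is_unit_one [simp]: "is_unit (1::'a::ring_1)"
  and uinv_one [simp]: "uinv (1::'a::ring_1) = 1"
  by (auto simp: is_unit_def intro: uinv_unique)

lemma is_unit_uinv: "is_unit x \<Longrightarrow> is_unit (uinv x)"
  using left_uinv right_uinv by (auto simp: is_unit_def)

lemma is_unit_mult:
  assumes "is_unit x" and "is_unit y"
  shows "is_unit (x * y)" and uinv_mult: "uinv (x * y) = uinv y * uinv x"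
proof -
  have "(x * y) * (uinv y * uinv x) = x * (y * uinv y) * uinv x" by (simp add: mult.assoc)
  moreover have "(uinv y * uinv x) * (x * y) = uinv y * (uinv x * x) * y" by (simp add: mult.assoc)
  ultimately have "(x * y) * (uinv y * uinv x) = 1" "(uinv y * uinv x) * (x * y) = 1"
    using assms by (simp_all add: right_uinv left_uinv)
  then show "is_unit (x * y)" and "uinv (x * y) = uinv y * uinv x"
    by (auto simp: is_unit_def intro: uinv_unique)
qed

lemma is_unit_minus_iff [simp]: "is_unit (- x) \<longleftrightarrow> is_unit x"
  unfolding is_unit_def by (metis minus_minus mult_minus_left mult_minus_right)

lemma is_unit_mult_cancel_left:
  assumes "is_unit u" and "is_unit (u * x)"
  shows "is_unit x"
proof -
  have "x = uinv u * (u * x)" using assms(1) by (simp add: left_uinv flip: mult.assoc)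
  then show ?thesis using assms by (metis is_unit_mult is_unit_uinv)
qed

lemma is_unit_mult_cancel_right:
  assumes "is_unit u" and "is_unit (x * u)"
  shows "is_unit x"
proof -
  have "x = (x * u) * uinv u" using assms(1) by (simp add: right_uinv mult.assoc)
  then show ?thesis using assms by (metis is_unit_mult is_unit_uinv)
qed

lemma is_unit_mult_units_iff:
  assumes "is_unit u" and "is_unit v"
  shows "is_unit (u * x * v) \<longleftrightarrow> is_unit x"
  by (meson assms is_unit_mult is_unit_mult_cancel_left is_unit_mult_cancel_right)

lemma is_unit_uinv_diff_one:
  assumes "is_unit a" and "is_unit (a - 1)"
  shows "is_unit (uinv a - 1)"
proof -
  have "uinv a - 1 = - (uinv a * (a - 1))" using assms(1) by (simp add: algebra_simps left_uinv)
  then show ?thesis using assms by (simp add: is_unit_mult is_unit_uinv)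
qed

lemma is_unit_diff_mult_uinv_iff:
  assumes "is_unit b"
  shows "is_unit (d - c * uinv a * b) \<longleftrightarrow> is_unit (d * uinv b - c * uinv a)"
proof -
  have "1 * (d - c * uinv a * b) * uinv b = d * uinv b - c * uinv a"
    using assms by (simp add: algebra_simps right_uinv mult.assoc)
  then show ?thesis using is_unit_mult_units_iff[OF is_unit_one is_unit_uinv[OF assms]] by metis
qed

lemma sum_lessThan_3: "(\<Sum>k<3. f k) = f 0 + f 1 + f (2::nat)"
  by (simp add: numeral_3_eq_3 numeral_2_eq_2 lessThan_Suc add_ac)

lemma all_less_3: "(\<forall>i<3. P i) \<longleftrightarrow> P 0 \<and> P 1 \<and> P (2::nat)"
  by (auto simp add: numeral_3_eq_3 less_Suc_eq numeral_2_eq_2)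

lemma mat_invertible_cong:
  assumes "\<And>i j. i < n \<Longrightarrow> j < n \<Longrightarrow> M i j = M' i j"
  shows "mat_invertible n M \<longleftrightarrow> mat_invertible n M'"
proof -
  have "mat_mul n M B i j = mat_mul n M' B i j" "mat_mul n B M i j = mat_mul n B M' i j"
    if "i < n" "j < n" for B i j
    unfolding mat_mul_def using assms that by (auto intro!: sum.cong)
  then show ?thesis unfolding mat_invertible_def by (intro ex_cong1) simp
qed

lemma mat_invertible_1_iff: "mat_invertible 1 M \<longleftrightarrow> is_unit (M 0 0)"
  unfolding mat_invertible_def mat_mul_def is_unit_def by auto

definition invertible2 :: "'a::ring_1 \<Rightarrow> 'a \<Rightarrow> 'a \<Rightarrow> 'a \<Rightarrow> bool" where
  "invertible2 p q r s \<longleftrightarrow> (\<exists>x y z w.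
     p * x + q * z = 1 \<and> p * y + q * w = 0 \<and> r * x + s * z = 0 \<and> r * y + s * w = 1 \<and>
     x * p + y * r = 1 \<and> x * q + y * s = 0 \<and> z * p + w * r = 0 \<and> z * q + w * s = 1)"

lemma mat_invertible_2_iff:
  "mat_invertible 2 M \<longleftrightarrow> invertible2 (M 0 0) (M 0 1) (M 1 0) (M 1 1)"
proof -
  have "mat_invertible 2 M \<longleftrightarrow> (\<exists>B::'a mat.
     M 0 0 * B 0 0 + M 0 1 * B 1 0 = 1 \<and> M 0 0 * B 0 1 + M 0 1 * B 1 1 = 0 \<and>
     M 1 0 * B 0 0 + M 1 1 * B 1 0 = 0 \<and> M 1 0 * B 0 1 + M 1 1 * B 1 1 = 1 \<and>
     B 0 0 * M 0 0 + B 0 1 * M 1 0 = 1 \<and> B 0 0 * M 0 1 + B 0 1 * M 1 1 = 0 \<and>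
     B 1 0 * M 0 0 + B 1 1 * M 1 0 = 0 \<and> B 1 0 * M 0 1 + B 1 1 * M 1 1 = 1)"
    unfolding mat_invertible_def mat_mul_def numeral_2_eq_2 One_nat_def
    by (intro ex_cong1) (auto simp add: All_less_Suc lessThan_Suc add.commute)
  also have "\<dots> \<longleftrightarrow> invertible2 (M 0 0) (M 0 1) (M 1 0) (M 1 1)"
    unfolding invertible2_def
    by (rule iffI, blast)
      (clarify, rule_tac x="\<lambda>i j. if i = 0 then (if j = 0 then x else y) else (if j = 0 then z else w)"
        in exI, simp)
  finally show ?thesis .
qed

definition index_lists :: "nat \<Rightarrow> nat list set" where
  "index_lists k = {rs. length rs = k \<and> sorted_wrt (<) rs \<and> set rs \<subseteq> {..<3}}"

lemma all_sub_inv_iff_index_lists: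
  "all_sub_inv M k \<longleftrightarrow>
     (\<forall>rs\<in>index_lists k. \<forall>cs\<in>index_lists k. mat_invertible k (\<lambda>i j. M (rs ! i) (cs ! j)))"
  by (auto simp: all_sub_inv_def index_lists_def)

lemma index_lists_1: "index_lists 1 = {[0], [1], [2]}"
  by (auto simp: index_lists_def length_Suc_conv)

lemma index_lists_2: "index_lists 2 = {[0, 1], [0, 2], [1, 2]}"
  by (auto simp: index_lists_def length_Suc_conv numeral_2_eq_2)

lemma index_lists_3: "index_lists 3 = {[0, 1, 2]}"
  by (auto simp: index_lists_def length_Suc_conv numeral_3_eq_3)

lemma all_sub_inv_3_iff: "all_sub_inv M 3 \<longleftrightarrow> mat_invertible 3 M"
proof -
  have "mat_invertible 3 (\<lambda>i j. M ([0, 1, 2] ! i) ([0, 1, 2] ! j)) \<longleftrightarrow> mat_invertible 3 M"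
    by (rule mat_invertible_cong) (auto simp: numeral_3_eq_3 less_Suc_eq numeral_2_eq_2)
  then show ?thesis by (simp add: all_sub_inv_iff_index_lists index_lists_3)
qed

lemma hat_S_iff:
  "M \<in> hat_S \<longleftrightarrow> M \<in> hat_M3 \<and> all_sub_inv M 1 \<and> all_sub_inv M 2 \<and>
     mat_invertible 3 M \<and> mat_invertible 3 (J2 M)"
  by (auto simp: hat_S_def S_set_def all_sub_inv_3_iff)

lemma invertible2_imp_is_unit_schur:
  assumes "is_unit p" and "invertible2 p q r s"
  shows "is_unit (s - r * uinv p * q)"
proof -
  obtain y z w where h: "p * y + q * w = 0" "r * y + s * w = 1" "z * p + w * r = 0" "z * q + w * s = 1"
    using assms(2) unfolding invertible2_def by blast
  have "y = uinv p * (p * y)" using assms(1) by (simp add: left_uinv flip: mult.assoc)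
  also have "p * y = - (q * w)" using h(1) by (simp add: eq_neg_iff_add_eq_0)
  finally have y: "y = - (uinv p * q * w)" by (simp add: mult.assoc)
  have "z = (z * p) * uinv p" using assms(1) by (simp add: right_uinv mult.assoc)
  also have "z * p = - (w * r)" using h(3) by (simp add: eq_neg_iff_add_eq_0)
  finally have z: "z = - (w * r * uinv p)" by (simp add: mult.assoc)
  have "(s - r * uinv p * q) * w = 1" using h(2) unfolding y by (simp add: algebra_simps)
  moreover have "w * (s - r * uinv p * q) = 1" using h(4) unfolding z by (simp add: algebra_simps)
  ultimately show ?thesis by (auto simp: is_unit_def)
qed

lemma is_unit_schur_imp_invertible2:
  assumes "is_unit p" and "is_unit (s - r * uinv p * q)"
  shows "invertible2 p q r s"
proof -
  define p' where "p' = uinv p"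
  define t where "t = uinv (s - r * p' * q)"
  have pp: "p * p' = 1" "p' * p = 1" "\<And>X. p * (p' * X) = X" "\<And>X. p' * (p * X) = X"
    using assms(1) by (simp_all add: p'_def right_uinv left_uinv flip: mult.assoc)
  have st: "s * t = 1 + r * p' * q * t" "t * s = 1 + t * r * p' * q"
    using right_uinv[OF assms(2)] left_uinv[OF assms(2)]
    by (simp_all add: t_def p'_def algebra_simps)
  \<comment> \<open>block inverse, t being the inverse of the Schur complement\<close>
  define x where "x = p' + p' * q * t * r * p'"
  define y where "y = - (p' * q * t)"
  define z where "z = - (t * r * p')"
  have "p * x + q * z = 1" "p * y + q * t = 0" "x * p + y * r = 1" "z * p + t * r = 0"
    unfolding x_def y_def z_def by (simp_all add: algebra_simps pp mult.assoc)
  moreover have "r * y + s * t = 1" "z * q + t * s = 1"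
    unfolding y_def z_def st by (simp_all add: algebra_simps)
  moreover have "r * x + s * z = r * p' - (s * t) * (r * p') + r * p' * q * t * r * p'"
    "x * q + y * s = p' * q - (p' * q) * (t * s) + p' * q * t * r * p' * q"
    unfolding x_def y_def z_def by (simp_all add: algebra_simps)
  then have "r * x + s * z = 0" "x * q + y * s = 0"
    unfolding st by (simp_all add: algebra_simps)
  ultimately show ?thesis unfolding invertible2_def by blast
qed

lemma invertible2_iff_is_unit_schur:
  "is_unit p \<Longrightarrow> invertible2 p q r s \<longleftrightarrow> is_unit (s - r * uinv p * q)"
  using invertible2_imp_is_unit_schur is_unit_schur_imp_invertible2 by blast

lemma matA_simps [simp]:
  "matA a b c d 0 0 = 1" "matA a b c d 0 1 = 1" "matA a b c d 0 2 = 1"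
  "matA a b c d 1 0 = 1" "matA a b c d 1 1 = a" "matA a b c d 1 2 = b"
  "matA a b c d 2 0 = 1" "matA a b c d 2 1 = c" "matA a b c d 2 2 = d"
  "matA a b c d 0 (Suc 0) = 1" "matA a b c d (Suc 0) 0 = 1" "matA a b c d (Suc 0) (Suc 0) = a"
  "matA a b c d (Suc 0) 2 = b" "matA a b c d 2 (Suc 0) = c"
  by (simp_all add: matA_def numeral_2_eq_2)

lemma matA_in_hat_M3: "matA a b c d \<in> hat_M3"
  by (simp add: hat_M3_def all_less_3)

lemma J2_matA:
  assumes "i < 3" and "j < 3"
  shows "J2 (matA a b c d) i j = matA (uinv a) (uinv c) (uinv b) (uinv d) i j"
  using assms by (auto simp: J2_def matA_def numeral_3_eq_3 less_Suc_eq)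

lemma diff_one_mult_add_diff_one_mult:
  "(p - 1) * x + (q - 1) * y = - (x + y) + p * x + q * (y::'a::ring_1)"
  "x * (p - 1) + y * (q - 1) = - (x + y) + x * p + y * (q::'a::ring_1)"
  by (simp_all add: algebra_simps)

lemma mat_invertible_matA_imp_invertible2:
  assumes "mat_invertible 3 (matA p q r s)"
  shows "invertible2 (p - 1) (q - 1) (r - 1) (s - 1)"
proof -
  obtain B where
    MB: "\<And>i j. i < 3 \<Longrightarrow> j < 3 \<Longrightarrow> (\<Sum>k<3. matA p q r s i k * B k j) = (if i = j then 1 else 0)" and
    BM: "\<And>i j. i < 3 \<Longrightarrow> j < 3 \<Longrightarrow> (\<Sum>k<3. B i k * matA p q r s k j) = (if i = j then 1 else 0)"
    using assms unfolding mat_invertible_def mat_mul_def by blast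
  have "B 0 1 + B 1 1 + B 2 1 = 0" "B 0 2 + B 1 2 + B 2 2 = 0"
       "B 1 0 + B 1 1 + B 1 2 = 0" "B 2 0 + B 2 1 + B 2 2 = 0"
    using MB[of 0 1] MB[of 0 2] BM[of 1 0] BM[of 2 0] by (simp_all add: sum_lessThan_3)
  then have border: "B 0 1 = - (B 1 1 + B 2 1)" "B 0 2 = - (B 1 2 + B 2 2)"
                    "B 1 0 = - (B 1 1 + B 1 2)" "B 2 0 = - (B 2 1 + B 2 2)"
    by (metis add.assoc eq_neg_iff_add_eq_0)+
  have "B 0 1 + p * B 1 1 + q * B 2 1 = 1" "B 0 2 + p * B 1 2 + q * B 2 2 = 0"
       "B 0 1 + r * B 1 1 + s * B 2 1 = 0" "B 0 2 + r * B 1 2 + s * B 2 2 = 1"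
       "B 1 0 + B 1 1 * p + B 1 2 * r = 1" "B 1 0 + B 1 1 * q + B 1 2 * s = 0"
       "B 2 0 + B 2 1 * p + B 2 2 * r = 0" "B 2 0 + B 2 1 * q + B 2 2 * s = 1"
    using MB[of 1 1] MB[of 1 2] MB[of 2 1] MB[of 2 2] BM[of 1 1] BM[of 1 2] BM[of 2 1] BM[of 2 2]
    by (simp_all add: sum_lessThan_3)
  then show ?thesis
    unfolding invertible2_def diff_one_mult_add_diff_one_mult border
    by (intro exI[of _ "B 1 1"] exI[of _ "B 1 2"] exI[of _ "B 2 1"] exI[of _ "B 2 2"]) simp
qed

lemma diff_one_mult_add_eq_iff:
  "(p - 1) * x + (q - 1) * y = c \<longleftrightarrow> p * x = c + x - q * y + (y::'a::ring_1)"
  "x * (p - 1) + y * (q - 1) = c \<longleftrightarrow> x * p = c + x - y * q + (y::'a::ring_1)"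
  by (auto simp: algebra_simps)

lemma invertible2_imp_mat_invertible_matA:
  assumes "invertible2 (p - 1) (q - 1) (r - 1) (s - 1)"
  shows "mat_invertible 3 (matA p q r s)"
proof -
  obtain x y z w where eqs:
    "p * x = 1 + x - q * z + z" "p * y = y - q * w + w"
    "r * x = x - s * z + z" "r * y = 1 + y - s * w + w"
    "x * p = 1 + x - y * r + y" "x * q = x - y * s + y"
    "z * p = z - w * r + w" "z * q = 1 + z - w * s + w"
    using assms unfolding invertible2_def diff_one_mult_add_eq_iff by auto
  \<comment> \<open>the inverse [[x, y], [z, w]], bordered by its negated row and column sums\<close>
  define B :: "'a mat" where
    "B = (\<lambda>i j. [[1 + x + y + z + w, - (x + z), - (y + w)], [- (x + y), x, y], [- (z + w), z, w]] ! i ! j)"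
  have "\<forall>i<3. \<forall>j<3. mat_mul 3 (matA p q r s) B i j = (if i = j then 1 else 0)"
       "\<forall>i<3. \<forall>j<3. mat_mul 3 B (matA p q r s) i j = (if i = j then 1 else 0)"
    unfolding all_less_3 mat_mul_def sum_lessThan_3 B_def by (simp_all add: algebra_simps eqs)
  then show ?thesis unfolding mat_invertible_def by blast
qed

lemma mat_invertible_matA_iff:
  "mat_invertible 3 (matA p q r s) \<longleftrightarrow> invertible2 (p - 1) (q - 1) (r - 1) (s - 1)"
  using invertible2_imp_mat_invertible_matA mat_invertible_matA_imp_invertible2 by blast

lemma is_unit_schur_matA_iff:
  assumes "is_unit (a - 1)" and "is_unit (b - a)" and "is_unit (d - c)"
  shows "is_unit ((d - 1) - (c - 1) * uinv (a - 1) * (b - 1)) \<longleftrightarrow>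
         is_unit (uinv (d - c) * (c - 1) - uinv (b - a) * (a - 1))"
proof -
  define u v w where "u = uinv (d - c)" and "v = uinv (b - a)" and "w = uinv (a - 1)"
  have inv: "(d - c) * u = 1" "v * (b - a) = 1" "(a - 1) * w = 1" "w * (a - 1) = 1"
    using assms by (simp_all add: u_def v_def w_def right_uinv left_uinv)
  have "(d - c) * (u * (c - 1) - v * (a - 1)) * (w * (b - a))
      = ((d - c) * u) * (c - 1) * w * (b - a) - (d - c) * (v * ((a - 1) * w) * (b - a))"
    by (simp add: algebra_simps)
  also have "\<dots> = (c - 1) * w * ((b - 1) - (a - 1)) - (d - c)"
    using inv by simp
  also have "\<dots> = (c - 1) * w * (b - 1) - (c - 1) * (w * (a - 1)) - (d - c)"
    by (simp add: algebra_simps)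
  also have "\<dots> = - ((d - 1) - (c - 1) * w * (b - 1))"
    using inv by (simp add: algebra_simps)
  finally have "(d - 1) - (c - 1) * w * (b - 1)
      = - ((d - c) * (u * (c - 1) - v * (a - 1)) * (w * (b - a)))"
    by simp
  moreover have "is_unit (w * (b - a))"
    using assms by (simp add: w_def is_unit_mult is_unit_uinv)
  ultimately show ?thesis
    using is_unit_mult_units_iff assms(3) by (simp add: u_def v_def w_def)
qed

lemma uinv_diff_mult_eq:
  assumes "is_unit a" and "is_unit b" and "(b - a) * v = 1"
  shows "(uinv a - 1) * (- (a * v * b)) = (a - 1) * v * b"
    and "(uinv b - uinv a) * (- (a * v * b)) = 1"
proof -
  have "(uinv a - 1) * a = 1 - a" using assms(1) by (simp add: algebra_simps left_uinv)
  then have "(uinv a - 1) * (- (a * v * b)) = - ((1 - a) * v * b)"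
    by (simp add: mult.assoc flip: mult.assoc[of "uinv a - 1" a])
  then show "(uinv a - 1) * (- (a * v * b)) = (a - 1) * v * b" by (simp add: algebra_simps)
  have "(uinv b - uinv a) * a = - (uinv b * (b - a))"
    using assms(1,2) by (simp add: algebra_simps left_uinv)
  then have "(uinv b - uinv a) * (- (a * v * b)) = uinv b * ((b - a) * v) * b"
    by (simp add: mult.assoc flip: mult.assoc[of "uinv b - uinv a" a])
  then show "(uinv b - uinv a) * (- (a * v * b)) = 1" using assms by (simp add: left_uinv)
qed

lemma schur_complement_mult_eq:
  assumes "is_unit p" and "is_unit f" and "(r - p) * f = 1" and "(s - q) * g = 1"
  shows "(s - r * uinv p * q) * g = 1 - uinv (p * f) * (q * g)"
proof -
  have "uinv (p * f) * (q * g) = uinv f * uinv p * q * g"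
    using assms(1,2) by (simp add: uinv_mult mult.assoc)
  then have "((r - p) * f) * (uinv (p * f) * (q * g)) = (r - p) * (f * uinv f) * uinv p * q * g"
    by (simp add: mult.assoc)
  also have "\<dots> = r * uinv p * q * g - (p * uinv p) * q * g"
    using assms(2) by (simp add: right_uinv algebra_simps)
  finally have "uinv (p * f) * (q * g) = r * uinv p * q * g - q * g"
    using assms by (simp add: right_uinv)
  then show ?thesis using assms(4) by (simp add: algebra_simps)
qed

lemma is_unit_schur_J2_matA_iff:
  assumes units: "is_unit a" "is_unit b" "is_unit c" "is_unit d"
    and "is_unit (a - 1)" and "is_unit (b - a)" and "is_unit (d - c)"
  shows "is_unit ((uinv d - 1) - (uinv b - 1) * uinv (uinv a - 1) * (uinv c - 1)) \<longleftrightarrow>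
         is_unit ((c - 1) * uinv (d - c) * d - (a - 1) * uinv (b - a) * b)"
proof -
  define v w where "v = uinv (b - a)" and "w = uinv (d - c)"
  define x y where "x = (a - 1) * v * b" and "y = (c - 1) * w * d"
  have v: "(b - a) * v = 1" "is_unit v" and w: "(d - c) * w = 1" "is_unit w"
    using assms by (simp_all add: v_def w_def right_uinv is_unit_uinv)
  define f g where "f = - (a * v * b)" and "g = - (c * w * d)"
  note ab = uinv_diff_mult_eq[OF units(1,2) v(1), folded f_def x_def]
  note cd = uinv_diff_mult_eq[OF units(3,4) w(1), folded g_def y_def]
  have f: "is_unit f" and g: "is_unit g" and x: "is_unit x"
    using assms v w by (simp_all add: f_def g_def x_def is_unit_mult)
  have "((uinv d - 1) - (uinv b - 1) * uinv (uinv a - 1) * (uinv c - 1)) * g = 1 - uinv x * y"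
    using schur_complement_mult_eq[OF is_unit_uinv_diff_one[OF units(1) assms(5)] f, of "uinv b - 1"
        "uinv d - 1" "uinv c - 1" g] ab cd
    by simp
  also have "\<dots> = uinv x * (x - y)" using x by (simp add: algebra_simps left_uinv)
  finally have "is_unit ((uinv d - 1) - (uinv b - 1) * uinv (uinv a - 1) * (uinv c - 1)) \<longleftrightarrow>
      is_unit (x - y)"
    using is_unit_mult_units_iff[OF is_unit_one g] is_unit_mult_units_iff[OF is_unit_uinv[OF x] is_unit_one]
    by (metis mult_1_left mult_1_right)
  also have "\<dots> \<longleftrightarrow> is_unit (y - x)"
    by (metis is_unit_minus_iff minus_diff_eq)
  finally show ?thesis by (simp add: x_def y_def v_def w_def)
qed

lemma all_sub_inv_matA_iff:
  "all_sub_inv (matA a b c d) 1 \<and> all_sub_inv (matA a b c d) 2 \<longleftrightarrow>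
    is_unit a \<and> is_unit b \<and> is_unit c \<and> is_unit d \<and>
    is_unit (a - 1) \<and> is_unit (b - 1) \<and> is_unit (c - 1) \<and> is_unit (d - 1) \<and>
    is_unit (d - c) \<and> is_unit (d - b) \<and> is_unit (c - a) \<and> is_unit (b - a) \<and>
    is_unit (d * uinv b - c * uinv a)"
proof -
  have "all_sub_inv (matA a b c d) 1 \<longleftrightarrow> is_unit a \<and> is_unit b \<and> is_unit c \<and> is_unit d"
    unfolding all_sub_inv_iff_index_lists index_lists_1 mat_invertible_1_iff by simp
  moreover have "all_sub_inv (matA a b c d) 2 \<longleftrightarrow>
      is_unit (a - 1) \<and> is_unit (b - 1) \<and> is_unit (c - 1) \<and> is_unit (d - 1) \<and>
      is_unit (d - c) \<and> is_unit (d - b) \<and> is_unit (c - a) \<and> is_unit (b - a) \<and>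
      is_unit (d * uinv b - c * uinv a)" if "is_unit a" "is_unit b"
    using that
    by (auto simp: all_sub_inv_iff_index_lists index_lists_2 mat_invertible_2_iff
        invertible2_iff_is_unit_schur is_unit_diff_mult_uinv_iff)
  ultimately show ?thesis by blast
qed

lemma mat_invertible_matA_iff_is_unit:
  assumes "is_unit (a - 1)" and "is_unit (b - a)" and "is_unit (d - c)"
  shows "mat_invertible 3 (matA a b c d) \<longleftrightarrow>
    is_unit (uinv (d - c) * (c - 1) - uinv (b - a) * (a - 1))"
  using assms by (simp add: mat_invertible_matA_iff invertible2_iff_is_unit_schur is_unit_schur_matA_iff)

lemma mat_invertible_J2_matA_iff_is_unit:
  assumes "is_unit a" "is_unit b" "is_unit c" "is_unit d"
    and "is_unit (a - 1)" and "is_unit (b - a)" and "is_unit (d - c)"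
  shows "mat_invertible 3 (J2 (matA a b c d)) \<longleftrightarrow>
    is_unit ((c - 1) * uinv (d - c) * d - (a - 1) * uinv (b - a) * b)"
proof -
  have "mat_invertible 3 (J2 (matA a b c d)) \<longleftrightarrow>
      mat_invertible 3 (matA (uinv a) (uinv c) (uinv b) (uinv d))"
    by (rule mat_invertible_cong) (rule J2_matA)
  also have "\<dots> \<longleftrightarrow> is_unit ((uinv d - 1) - (uinv b - 1) * uinv (uinv a - 1) * (uinv c - 1))"
    using assms by (simp add: mat_invertible_matA_iff invertible2_iff_is_unit_schur is_unit_uinv_diff_one)
  also have "\<dots> \<longleftrightarrow> is_unit ((c - 1) * uinv (d - c) * d - (a - 1) * uinv (b - a) * b)"
    using assms by (rule is_unit_schur_J2_matA_iff)
  finally show ?thesis .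
qed

theorem lemma7:
  fixes a b c d :: "'a::ring_1"
  defines "A \<equiv> matA a b c d"
  shows "((all_sub_inv A 1 \<and> all_sub_inv A 2) \<longleftrightarrow>
           (is_unit a \<and> is_unit b \<and> is_unit c \<and> is_unit d \<and>
            is_unit (a - 1) \<and> is_unit (b - 1) \<and> is_unit (c - 1) \<and> is_unit (d - 1) \<and>
            is_unit (d - c) \<and> is_unit (d - b) \<and> is_unit (c - a) \<and> is_unit (b - a) \<and>
            is_unit (d * uinv b - c * uinv a)))
       \<and> ((all_sub_inv A 1 \<and> all_sub_inv A 2) \<longrightarrow>
           (mat_invertible 3 A \<longleftrightarrow>
              is_unit (uinv (d - c) * (c - 1) - uinv (b - a) * (a - 1)))
         \<and> (mat_invertible 3 (J2 A) \<longleftrightarrow>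
              is_unit ((c - 1) * uinv (d - c) * d - (a - 1) * uinv (b - a) * b)))
       \<and> (A \<in> hat_S \<longleftrightarrow>
           (is_unit a \<and> is_unit b \<and> is_unit c \<and> is_unit d \<and>
            is_unit (a - 1) \<and> is_unit (b - 1) \<and> is_unit (c - 1) \<and> is_unit (d - 1) \<and>
            is_unit (d - c) \<and> is_unit (d - b) \<and> is_unit (c - a) \<and> is_unit (b - a) \<and>
            is_unit (d * uinv b - c * uinv a) \<and>
            is_unit (uinv (d - c) * (c - 1) - uinv (b - a) * (a - 1)) \<and>
            is_unit ((c - 1) * uinv (d - c) * d - (a - 1) * uinv (b - a) * b)))"
proof -
  note all_sub_inv_matA_iff[of a b c d, folded A_def]
  moreover have "(all_sub_inv A 1 \<and> all_sub_inv A 2) \<longrightarrow>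
      (mat_invertible 3 A \<longleftrightarrow> is_unit (uinv (d - c) * (c - 1) - uinv (b - a) * (a - 1)))
      \<and> (mat_invertible 3 (J2 A) \<longleftrightarrow>
           is_unit ((c - 1) * uinv (d - c) * d - (a - 1) * uinv (b - a) * b))"
    unfolding A_def all_sub_inv_matA_iff
    by (simp add: mat_invertible_matA_iff_is_unit mat_invertible_J2_matA_iff_is_unit)
  moreover have "A \<in> hat_S \<longleftrightarrow>
      (all_sub_inv A 1 \<and> all_sub_inv A 2) \<and> mat_invertible 3 A \<and> mat_invertible 3 (J2 A)"
    unfolding hat_S_iff A_def using matA_in_hat_M3 by blast
  ultimately show ?thesis by argo
qed

end
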